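(* Let $\alpha$ be a proper fraction ($0<\alpha<1$) and let $u=(u_k)$ be a sequence with $u_k\neq 0$ for all $k\in\mathbb{N}$. Then the sequence spaces $$c_0(\Gamma,\Delta^{(\alpha)},u)=\Big\{x\in\omega:\Big(\sum_{j=0}^k u_j\Delta^{(\alpha)}x_j\Big)_{k\in\mathbb{N}}\in c_0\Big\},\qquad c(\Gamma,\Delta^{(\alpha)},u)=\Big\{x\in\omega:\Big(\sum_{j=0}^k u_j\Delta^{(\alpha)}x_j\Big)_{k\in\mathbb{N}}\in c\Big\}$$ are BK-spaces with the norm $$\|x\|_{c_0(\Gamma,\Delta^{(\alpha)},u)}=\|x\|_{c(\Gamma,\Delta^{(\alpha)},u)}=\sup_k\Big|\sum_{j=0}^k u_j\Delta^{(\alpha)}x_j\Big|.$$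
   Context: $\omega$ denotes the space of all real or complex sequences, $c$ the space of convergent sequences and $c_0$ the space of null sequences; $\mathbb{N}=\{0,1,2,\dots\}$. For $x=(x_k)\in\omega$ the fractional difference operator is $\Delta^{(\alpha)}x_k=\sum_{i=0}^{\infty}(-1)^i\frac{\Gamma(\alpha+1)}{i!\,\Gamma(\alpha+1-i)}x_{k-i}$, where $\Gamma$ is the gamma function and $x_j=0$ for $j<0$ (so the sum is finite). A BK-space is a Banach sequence space on which every coordinate functional $x\mapsto x_k$ is continuous. *)

theory Defs
  imports "HOL-Analysis.Analysis"
begin

definition frac_coef :: "real \<Rightarrow> nat \<Rightarrow> real" where
  "frac_coef \<alpha> i = (-1) ^ i * Gamma (\<alpha> + 1) / (fact i * Gamma (\<alpha> + 1 - real i))"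

text \<open>Fractional difference; terms with negative index vanish, so the sum is finite.\<close>
definition frac_diff :: "real \<Rightarrow> (nat \<Rightarrow> 'a::real_normed_field) \<Rightarrow> nat \<Rightarrow> 'a" where
  "frac_diff \<alpha> x k = (\<Sum>i\<le>k. of_real (frac_coef \<alpha> i) * x (k - i))"

definition gamma_seq :: "real \<Rightarrow> (nat \<Rightarrow> 'a::real_normed_field) \<Rightarrow> (nat \<Rightarrow> 'a) \<Rightarrow> nat \<Rightarrow> 'a" where
  "gamma_seq \<alpha> u x k = (\<Sum>j\<le>k. u j * frac_diff \<alpha> x j)"

definition c0_GD :: "real \<Rightarrow> (nat \<Rightarrow> 'a::real_normed_field) \<Rightarrow> (nat \<Rightarrow> 'a) set" where
  "c0_GD \<alpha> u = {x. gamma_seq \<alpha> u x \<longlonglongrightarrow> 0}"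

definition c_GD :: "real \<Rightarrow> (nat \<Rightarrow> 'a::real_normed_field) \<Rightarrow> (nat \<Rightarrow> 'a) set" where
  "c_GD \<alpha> u = {x. convergent (gamma_seq \<alpha> u x)}"

definition GD_norm :: "real \<Rightarrow> (nat \<Rightarrow> 'a::real_normed_field) \<Rightarrow> (nat \<Rightarrow> 'a) \<Rightarrow> real" where
  "GD_norm \<alpha> u x = (SUP k. norm (gamma_seq \<alpha> u x k))"

definition BK_space :: "(nat \<Rightarrow> 'a::real_normed_field) set \<Rightarrow> ((nat \<Rightarrow> 'a) \<Rightarrow> real) \<Rightarrow> bool" where
  "BK_space X N \<longleftrightarrow>
     (\<lambda>k. 0) \<in> X \<and>
     (\<forall>x\<in>X. \<forall>y\<in>X. (\<lambda>k. x k + y k) \<in> X) \<and>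
     (\<forall>c. \<forall>x\<in>X. (\<lambda>k. c * x k) \<in> X) \<and>
     (\<forall>x\<in>X. 0 \<le> N x \<and> (N x = 0 \<longleftrightarrow> x = (\<lambda>k. 0))) \<and>
     (\<forall>c. \<forall>x\<in>X. N (\<lambda>k. c * x k) = norm c * N x) \<and>
     (\<forall>x\<in>X. \<forall>y\<in>X. N (\<lambda>k. x k + y k) \<le> N x + N y) \<and>
     (\<forall>f. (\<forall>n. f n \<in> X) \<and> (\<forall>e>0. \<exists>M. \<forall>m\<ge>M. \<forall>n\<ge>M. N (\<lambda>k. f m k - f n k) < e)
          \<longrightarrow> (\<exists>x\<in>X. (\<lambda>n. N (\<lambda>k. f n k - x k)) \<longlonglongrightarrow> 0)) \<and>
     (\<forall>k. \<forall>f. \<forall>x\<in>X. (\<forall>n. f n \<in> X) \<and> (\<lambda>n. N (\<lambda>j. f n j - x j)) \<longlonglongrightarrow> 0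
          \<longrightarrow> (\<lambda>n. f n k) \<longlonglongrightarrow> x k)"

end

(*
  The transform x \<mapsto> \<Gamma>x, (\<Gamma>x)_k = \<Sum>_{j\<le>k} u_j \<Delta>^(\<alpha>) x_j, is linear and lower
  triangular with diagonal entries u_k (the leading coefficient of \<Delta>^(\<alpha>) is
  \<Gamma>(\<alpha>+1)/\<Gamma>(\<alpha>+1) = 1). Solving the triangular system bounds |x_k| by C_k sup_j |(\<Gamma>x)_j|,
  so the spaces are the preimages of c_0 and c under an injective transform, normed by the
  pulled-back sup norm, and the coordinate functionals are continuous. A Cauchy sequence then
  converges coordinatewise to some x, its images converge uniformly to \<Gamma>x, and since c_0 and c
  are closed in the space of bounded sequences, x belongs to the space again.
*)
theory Submission
  imports Defs
begin

text \<open>Only meaningful for bounded sequences: otherwise the supremum is an unspecified real.\<close>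
definition sup_norm :: "(nat \<Rightarrow> 'a::real_normed_vector) \<Rightarrow> real" where
  "sup_norm s = (SUP k. norm (s k))"

lemma norm_le_sup_norm: "Bseq s \<Longrightarrow> norm (s k) \<le> sup_norm s"
  unfolding sup_norm_def by (rule cSUP_upper) (auto dest: Bseq_bdd_above')

lemma sup_norm_le: "(\<And>k. norm (s k) \<le> B) \<Longrightarrow> sup_norm s \<le> B"
  unfolding sup_norm_def by (rule cSUP_least) auto

lemma sup_norm_nonneg: "Bseq s \<Longrightarrow> 0 \<le> sup_norm s"
  using norm_le_sup_norm[of s 0] norm_ge_zero order_trans by blast

lemma sup_norm_zero [simp]: "sup_norm (\<lambda>k. 0) = 0"
  by (simp add: sup_norm_def)

lemma sup_norm_add_le:
  "Bseq s \<Longrightarrow> Bseq t \<Longrightarrow> sup_norm (\<lambda>k. s k + t k) \<le> sup_norm s + sup_norm t"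
  by (intro sup_norm_le order_trans[OF norm_triangle_ineq] add_mono norm_le_sup_norm)

lemma sup_norm_scale_le:
  fixes s :: "nat \<Rightarrow> 'a::real_normed_div_algebra"
  shows "Bseq s \<Longrightarrow> sup_norm (\<lambda>k. c * s k) \<le> norm c * sup_norm s"
  by (intro sup_norm_le) (simp add: norm_mult mult_left_mono norm_le_sup_norm)

lemma sup_norm_scale:
  fixes s :: "nat \<Rightarrow> 'a::real_normed_field"
  assumes "Bseq s"
  shows "sup_norm (\<lambda>k. c * s k) = norm c * sup_norm s"
proof (cases "c = 0")
  case False
  have "Bseq (\<lambda>k. c * s k)"
    using assms False by (simp add: Bseq_cmult_iff)
  then have "sup_norm s \<le> norm (inverse c) * sup_norm (\<lambda>k. c * s k)"
    using sup_norm_scale_le[of "\<lambda>k. c * s k" "inverse c"] False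
    by (simp add: mult.assoc[symmetric])
  then have "norm c * sup_norm s \<le> sup_norm (\<lambda>k. c * s k)"
    using False by (simp add: norm_divide field_simps)
  then show ?thesis
    using sup_norm_scale_le[OF assms, of c] by linarith
qed simp

lemma norm_le_sup_norm_partial_sums:
  fixes a :: "nat \<Rightarrow> 'a::real_normed_vector"
  assumes "Bseq (\<lambda>k. \<Sum>j\<le>k. a j)"
  shows "norm (a k) \<le> 2 * sup_norm (\<lambda>k. \<Sum>j\<le>k. a j)"
proof (cases k)
  case 0
  then show ?thesis
    using norm_le_sup_norm[OF assms, of 0] sup_norm_nonneg[OF assms] by simp
next
  case (Suc m)
  then have "a k = (\<Sum>j\<le>k. a j) - (\<Sum>j\<le>m. a j)"
    by simp
  then have "norm (a k) \<le> norm (\<Sum>j\<le>k. a j) + norm (\<Sum>j\<le>m. a j)"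
    by (metis norm_triangle_ineq4)
  then show ?thesis
    using norm_le_sup_norm[OF assms, of k] norm_le_sup_norm[OF assms, of m] by simp
qed

lemma sup_norm_diff_tendsto_zero:
  assumes "uniform_limit UNIV s t sequentially"
  shows "(\<lambda>n. sup_norm (\<lambda>k. s n k - t k)) \<longlonglongrightarrow> 0"
proof (rule LIMSEQ_I)
  fix e :: real
  assume "e > 0"
  then obtain M where M: "\<And>n k. n \<ge> M \<Longrightarrow> dist (s n k) (t k) < e / 2"
    using assms \<open>e > 0\<close> unfolding uniform_limit_sequentially_iff by (meson UNIV_I half_gt_zero)
  have "norm (sup_norm (\<lambda>k. s n k - t k)) < e" if "n \<ge> M" for n
  proof -
    have bound: "norm (s n k - t k) \<le> e / 2" for k
      using M[OF that, of k] by (simp add: dist_norm)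
    then have "0 \<le> sup_norm (\<lambda>k. s n k - t k)"
      by (intro sup_norm_nonneg BseqI')
    moreover have "sup_norm (\<lambda>k. s n k - t k) \<le> e / 2"
      by (intro sup_norm_le bound)
    ultimately show ?thesis
      using \<open>e > 0\<close> by simp
  qed
  then show "\<exists>M. \<forall>n\<ge>M. norm (sup_norm (\<lambda>k. s n k - t k) - 0) < e"
    by auto
qed

lemma LIMSEQ_uniform_limit:
  fixes f :: "nat \<Rightarrow> nat \<Rightarrow> 'a::metric_space"
  assumes "\<And>n. f n \<longlonglongrightarrow> l" and "uniform_limit UNIV f h sequentially"
  shows "h \<longlonglongrightarrow> l"
  using swap_uniform_limit'[of f "\<lambda>_. l" sequentially sequentially l UNIV h] assms by simp

lemma convergent_uniform_limit:
  fixes f :: "nat \<Rightarrow> nat \<Rightarrow> 'a::complete_space"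
  assumes convergent: "\<And>n. convergent (f n)" and limit: "uniform_limit UNIV f h sequentially"
  shows "convergent h"
proof -
  have "Cauchy h"
  proof (rule metric_CauchyI)
    fix e :: real
    assume "e > 0"
    then have "e / 3 > 0"
      by simp
    then obtain N where "\<forall>n\<ge>N. \<forall>k\<in>UNIV. dist (f n k) (h k) < e / 3"
      using limit unfolding uniform_limit_sequentially_iff by blast
    then have n: "\<And>k. dist (f N k) (h k) < e / 3"
      by simp
    obtain M where M: "\<And>i j. i \<ge> M \<Longrightarrow> j \<ge> M \<Longrightarrow> dist (f N i) (f N j) < e / 3"
      using metric_CauchyD[OF convergent_Cauchy[OF convergent[of N]], of "e / 3"] \<open>e > 0\<close> by auto
    have "dist (h i) (h j) < e" if "i \<ge> M" "j \<ge> M" for i j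
      using dist_triangle_third[OF _ M[OF that] n[of j]] n[of i] by (simp add: dist_commute)
    then show "\<exists>M. \<forall>i\<ge>M. \<forall>j\<ge>M. dist (h i) (h j) < e"
      by blast
  qed
  then show ?thesis
    by (rule Cauchy_convergent)
qed

locale closed_bseq_subspace =
  fixes Y :: "(nat \<Rightarrow> 'a::real_normed_field) set"
  assumes zero_mem: "(\<lambda>k. 0) \<in> Y"
    and add_mem: "s \<in> Y \<Longrightarrow> t \<in> Y \<Longrightarrow> (\<lambda>k. s k + t k) \<in> Y"
    and scale_mem: "s \<in> Y \<Longrightarrow> (\<lambda>k. c * s k) \<in> Y"
    and Bseq_mem: "s \<in> Y \<Longrightarrow> Bseq s"
    and uniform_limit_mem: "(\<And>n. f n \<in> Y) \<Longrightarrow> uniform_limit UNIV f h sequentially \<Longrightarrow> h \<in> Y"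
begin

lemma diff_mem: "s \<in> Y \<Longrightarrow> t \<in> Y \<Longrightarrow> (\<lambda>k. s k - t k) \<in> Y"
  using add_mem[of s "\<lambda>k. (-1) * t k"] scale_mem[of t "-1"] by simp

end

lemma closed_bseq_subspace_null_seqs:
  "closed_bseq_subspace {s :: nat \<Rightarrow> 'a::real_normed_field. s \<longlonglongrightarrow> 0}"
  by unfold_locales
    (auto intro: tendsto_add_zero tendsto_mult_right_zero LIMSEQ_uniform_limit convergent_imp_Bseq convergentI)

lemma closed_bseq_subspace_convergent_seqs:
  "closed_bseq_subspace {s :: nat \<Rightarrow> 'a::{real_normed_field, banach}. convergent s}"
  by unfold_locales
    (auto intro: convergent_const convergent_add convergent_mult convergent_uniform_limit convergent_imp_Bseq)

lemma triangular_system_bound: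
  fixes V :: "(nat \<Rightarrow> 'a::real_normed_vector) set" and N :: "(nat \<Rightarrow> 'a) \<Rightarrow> real"
  assumes recursive_bound: "\<And>x k. x \<in> V \<Longrightarrow> norm (x k) \<le> a k * N x + (\<Sum>i<k. b k i * norm (x i))"
    and nonneg: "\<And>k i. 0 \<le> b k i"
  shows "\<exists>C. \<forall>x\<in>V. norm (x k) \<le> C * N x"
proof -
  have "\<exists>C. \<forall>i\<le>k. \<forall>x\<in>V. norm (x i) \<le> C i * N x"
  proof (induction k)
    case 0
    show ?case
      using recursive_bound[of _ 0] by (intro exI[of _ "\<lambda>_. a 0"]) simp
  next
    case (Suc k)
    then obtain C where C: "\<And>i x. i \<le> k \<Longrightarrow> x \<in> V \<Longrightarrow> norm (x i) \<le> C i * N x"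
      by blast
    define C' where "C' = C(Suc k := a (Suc k) + (\<Sum>i<Suc k. b (Suc k) i * C i))"
    have "norm (x (Suc k)) \<le> C' (Suc k) * N x" if "x \<in> V" for x
    proof -
      have "norm (x (Suc k)) \<le> a (Suc k) * N x + (\<Sum>i<Suc k. b (Suc k) i * norm (x i))"
        using recursive_bound[OF that] .
      also have "\<dots> \<le> a (Suc k) * N x + (\<Sum>i<Suc k. b (Suc k) i * (C i * N x))"
        by (intro add_left_mono sum_mono mult_left_mono C nonneg that) simp
      also have "\<dots> = C' (Suc k) * N x"
        by (simp add: C'_def distrib_right sum_distrib_right mult.assoc)
      finally show ?thesis .
    qed
    then show ?case
      using C by (intro exI[of _ C']) (auto simp: C'_def le_Suc_eq)
  qed
  then show ?thesis
    by blast
qed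

locale sequence_transform =
  fixes T :: "(nat \<Rightarrow> 'a::{real_normed_field, banach}) \<Rightarrow> nat \<Rightarrow> 'a"
  assumes add: "T (\<lambda>k. x k + y k) = (\<lambda>k. T x k + T y k)"
    and scale: "T (\<lambda>k. c * x k) = (\<lambda>k. c * T x k)"
    and coordinate_bound: "\<exists>C. \<forall>x. Bseq (T x) \<longrightarrow> norm (x k) \<le> C * sup_norm (T x)"
    and tendsto: "(\<And>j. (\<lambda>n. f n j) \<longlonglongrightarrow> x j) \<Longrightarrow> (\<lambda>n. T (f n) k) \<longlonglongrightarrow> T x k"
begin

lemma diff: "T (\<lambda>k. x k - y k) = (\<lambda>k. T x k - T y k)"
  using add[of x "\<lambda>k. (-1) * y k"] scale[of "-1" y] by simp

lemma zero: "T (\<lambda>k. 0) = (\<lambda>k. 0)"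
  using scale[of 0] by simp

lemma coordinate_bound_pos: "\<exists>C>0. \<forall>x. Bseq (T x) \<longrightarrow> norm (x k) \<le> C * sup_norm (T x)"
proof -
  obtain C where C: "\<And>x. Bseq (T x) \<Longrightarrow> norm (x k) \<le> C * sup_norm (T x)"
    using coordinate_bound by blast
  have "norm (x k) \<le> max C 1 * sup_norm (T x)" if "Bseq (T x)" for x
    using C[OF that] mult_right_mono[OF max.cobounded1[of C 1] sup_norm_nonneg[OF that]] by linarith
  then show ?thesis
    by (intro exI[of _ "max C 1"]) auto
qed

lemma coordinate_tendsto:
  assumes "\<And>n. Bseq (T (\<lambda>j. f n j - x j))" and "(\<lambda>n. sup_norm (T (\<lambda>j. f n j - x j))) \<longlonglongrightarrow> 0"
  shows "(\<lambda>n. f n k) \<longlonglongrightarrow> x k"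
proof -
  obtain C where C: "\<And>x. Bseq (T x) \<Longrightarrow> norm (x k) \<le> C * sup_norm (T x)"
    using coordinate_bound by blast
  have "(\<lambda>n. f n k - x k) \<longlonglongrightarrow> 0"
    using C[OF assms(1)]
    by (intro Lim_null_comparison[OF _ tendsto_mult_right_zero[OF assms(2), of C]] always_eventually allI)
  then show ?thesis
    by (simp add: Lim_null[symmetric])
qed

lemma Cauchy_coordinates:
  assumes "\<And>m n. Bseq (T (\<lambda>j. f m j - f n j))"
    and "\<And>e. e > 0 \<Longrightarrow> \<exists>M. \<forall>m\<ge>M. \<forall>n\<ge>M. sup_norm (T (\<lambda>j. f m j - f n j)) < e"
  shows "Cauchy (\<lambda>n. f n k)"
proof (rule metric_CauchyI)
  obtain C where "C > 0" and C: "\<And>x. Bseq (T x) \<Longrightarrow> norm (x k) \<le> C * sup_norm (T x)"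
    using coordinate_bound_pos by blast
  fix e :: real
  assume "e > 0"
  then obtain M where M: "\<And>m n. m \<ge> M \<Longrightarrow> n \<ge> M \<Longrightarrow> sup_norm (T (\<lambda>j. f m j - f n j)) < e / C"
    using assms(2)[of "e / C"] \<open>C > 0\<close> by auto
  have "dist (f m k) (f n k) < e" if "m \<ge> M" "n \<ge> M" for m n
  proof -
    have "dist (f m k) (f n k) \<le> C * sup_norm (T (\<lambda>j. f m j - f n j))"
      using C[OF assms(1)] by (simp add: dist_norm)
    also have "\<dots> < C * (e / C)"
      using M[OF that] \<open>C > 0\<close> by (intro mult_strict_left_mono)
    finally show ?thesis
      using \<open>C > 0\<close> by simp
  qed
  then show "\<exists>M. \<forall>m\<ge>M. \<forall>n\<ge>M. dist (f m k) (f n k) < e"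
    by blast
qed

lemma uniform_limit_if_Cauchy:
  assumes "\<And>m n. Bseq (T (\<lambda>j. f m j - f n j))"
    and "\<And>e. e > 0 \<Longrightarrow> \<exists>M. \<forall>m\<ge>M. \<forall>n\<ge>M. sup_norm (T (\<lambda>j. f m j - f n j)) < e"
    and "\<And>k. (\<lambda>n. f n k) \<longlonglongrightarrow> x k"
  shows "uniform_limit UNIV (\<lambda>n. T (f n)) (T x) sequentially"
proof -
  have "dist (T (f m) k) (T (f n) k) \<le> sup_norm (T (\<lambda>j. f m j - f n j))" for m n k
    using norm_le_sup_norm[OF assms(1)] by (simp add: dist_norm diff)
  then have "uniformly_Cauchy_on UNIV (\<lambda>n. T (f n))"
    unfolding uniformly_Cauchy_on_def using assms(2) by (meson le_less_trans)
  then obtain l where l: "uniform_limit UNIV (\<lambda>n. T (f n)) l sequentially"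
    using Cauchy_uniformly_convergent uniformly_convergent_on_def by blast
  have "l = T x"
    using LIMSEQ_unique[OF tendsto_uniform_limitI[OF l] tendsto[OF assms(3)]] by auto
  with l show ?thesis
    by simp
qed

end

locale BK_preimage = sequence_transform T + closed_bseq_subspace Y
  for T :: "(nat \<Rightarrow> 'a::{real_normed_field, banach}) \<Rightarrow> nat \<Rightarrow> 'a" and Y :: "(nat \<Rightarrow> 'a) set"
begin

lemma complete:
  assumes mem: "\<And>n. T (f n) \<in> Y"
    and Cauchy: "\<And>e. e > 0 \<Longrightarrow> \<exists>M. \<forall>m\<ge>M. \<forall>n\<ge>M. sup_norm (T (\<lambda>j. f m j - f n j)) < e"
  shows "\<exists>x. T x \<in> Y \<and> (\<lambda>n. sup_norm (T (\<lambda>j. f n j - x j))) \<longlonglongrightarrow> 0"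
proof -
  have bounded: "Bseq (T (\<lambda>j. f m j - f n j))" for m n
    using Bseq_mem[OF diff_mem[OF mem mem]] by (simp add: diff)
  define x where "x k = lim (\<lambda>n. f n k)" for k
  have "(\<lambda>n. f n k) \<longlonglongrightarrow> x k" for k
    unfolding x_def using Cauchy_coordinates[OF bounded Cauchy]
    by (simp add: Cauchy_convergent_iff convergent_LIMSEQ_iff)
  then have limit: "uniform_limit UNIV (\<lambda>n. T (f n)) (T x) sequentially"
    by (intro uniform_limit_if_Cauchy[OF bounded Cauchy])
  then have "T x \<in> Y"
    using mem by (rule uniform_limit_mem[rotated])
  moreover have "(\<lambda>n. sup_norm (T (\<lambda>j. f n j - x j))) \<longlonglongrightarrow> 0"
    using sup_norm_diff_tendsto_zero[OF limit] by (simp add: diff)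
  ultimately show ?thesis
    by blast
qed

theorem BK_space: "BK_space {x. T x \<in> Y} (\<lambda>x. sup_norm (T x))"
proof -
  have definite: "sup_norm (T x) = 0 \<longleftrightarrow> x = (\<lambda>k. 0)" if "T x \<in> Y" for x
  proof
    assume "sup_norm (T x) = 0"
    then show "x = (\<lambda>k. 0)"
      using coordinate_bound Bseq_mem[OF that] by (fastforce simp: fun_eq_iff)
  qed (simp add: zero)
  have Bseq_diff: "Bseq (T (\<lambda>k. x k - y k))" if "T x \<in> Y" "T y \<in> Y" for x y
    using Bseq_mem[OF diff_mem[OF that]] by (simp add: diff)
  show ?thesis
    unfolding BK_space_def mem_Collect_eq
    by (auto simp: zero add scale zero_mem add_mem scale_mem definite Bseq_diff
        intro: sup_norm_nonneg sup_norm_scale sup_norm_add_le Bseq_mem complete coordinate_tendsto)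
qed

end

lemma frac_coef_0: "\<alpha> + 1 \<notin> \<int>\<^sub>\<le>\<^sub>0 \<Longrightarrow> frac_coef \<alpha> 0 = 1"
  by (simp add: frac_coef_def Gamma_eq_zero_iff)

lemma frac_diff_triangular:
  "frac_diff \<alpha> x k = of_real (frac_coef \<alpha> 0) * x k + (\<Sum>i<k. of_real (frac_coef \<alpha> (k - i)) * x i)"
proof -
  have "frac_diff \<alpha> x k = (\<Sum>i<Suc k. of_real (frac_coef \<alpha> (k - (k - i))) * x (k - i))"
    unfolding frac_diff_def lessThan_Suc_atMost by (intro sum.cong) auto
  also have "\<dots> = (\<Sum>i<Suc k. of_real (frac_coef \<alpha> (k - i)) * x i)"
    using sum.nat_diff_reindex[of "\<lambda>i. of_real (frac_coef \<alpha> (k - i)) * x i" "Suc k"] by simp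
  finally show ?thesis
    by simp
qed

lemma gamma_seq_add:
  "gamma_seq \<alpha> u (\<lambda>k. x k + y k) = (\<lambda>k. gamma_seq \<alpha> u x k + gamma_seq \<alpha> u y k)"
  by (simp add: fun_eq_iff gamma_seq_def frac_diff_def distrib_left sum.distrib)

lemma gamma_seq_scale:
  "gamma_seq \<alpha> u (\<lambda>k. c * x k) = (\<lambda>k. c * gamma_seq \<alpha> u x k)"
  by (simp add: fun_eq_iff gamma_seq_def frac_diff_def sum_distrib_left mult.left_commute)

lemma gamma_seq_tendsto:
  "(\<And>j. (\<lambda>n. f n j) \<longlonglongrightarrow> x j) \<Longrightarrow> (\<lambda>n. gamma_seq \<alpha> u (f n) k) \<longlonglongrightarrow> gamma_seq \<alpha> u x k"
  unfolding gamma_seq_def frac_diff_def by (intro tendsto_intros)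

lemma gamma_seq_coordinate_bound:
  fixes u :: "nat \<Rightarrow> 'a::real_normed_field"
  assumes "\<alpha> + 1 \<notin> \<int>\<^sub>\<le>\<^sub>0" and "\<And>k. u k \<noteq> 0"
  shows "\<exists>C. \<forall>x. Bseq (gamma_seq \<alpha> u x) \<longrightarrow> norm (x k) \<le> C * sup_norm (gamma_seq \<alpha> u x)"
proof -
  have "norm (x k) \<le> 2 / norm (u k) * sup_norm (gamma_seq \<alpha> u x)
          + (\<Sum>i<k. \<bar>frac_coef \<alpha> (k - i)\<bar> * norm (x i))"
    if "x \<in> {x. Bseq (gamma_seq \<alpha> u x)}" for x k
  proof -
    have partial_sums: "gamma_seq \<alpha> u x = (\<lambda>k. \<Sum>j\<le>k. u j * frac_diff \<alpha> x j)"
      by (simp add: fun_eq_iff gamma_seq_def)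
    have "norm (u k) * norm (frac_diff \<alpha> x k) \<le> 2 * sup_norm (gamma_seq \<alpha> u x)"
      using norm_le_sup_norm_partial_sums[of "\<lambda>j. u j * frac_diff \<alpha> x j" k] that
      by (simp add: partial_sums norm_mult)
    then have "norm (frac_diff \<alpha> x k) \<le> 2 / norm (u k) * sup_norm (gamma_seq \<alpha> u x)"
      using assms(2)[of k] by (simp add: field_simps)
    moreover have "x k = frac_diff \<alpha> x k - (\<Sum>i<k. of_real (frac_coef \<alpha> (k - i)) * x i)"
      by (simp add: frac_diff_triangular frac_coef_0[OF assms(1)])
    then have "norm (x k) \<le> norm (frac_diff \<alpha> x k) + norm (\<Sum>i<k. of_real (frac_coef \<alpha> (k - i)) * x i)"
      by (metis norm_triangle_ineq4)
    moreover have "norm (\<Sum>i<k. of_real (frac_coef \<alpha> (k - i)) * x i) \<le> (\<Sum>i<k. \<bar>frac_coef \<alpha> (k - i)\<bar> * norm (x i))"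
      by (rule order_trans[OF norm_sum]) (simp add: norm_mult)
    ultimately show ?thesis
      by linarith
  qed
  from triangular_system_bound[where V = "{x. Bseq (gamma_seq \<alpha> u x)}" and N = "\<lambda>x. sup_norm (gamma_seq \<alpha> u x)", OF this]
  show ?thesis
    by simp
qed

lemma sequence_transform_gamma_seq:
  assumes "\<alpha> + 1 \<notin> \<int>\<^sub>\<le>\<^sub>0" and "\<And>k. u k \<noteq> 0"
  shows "sequence_transform (gamma_seq \<alpha> u)"
  by unfold_locales
    (use gamma_seq_coordinate_bound[OF assms] in \<open>auto simp: gamma_seq_add gamma_seq_scale intro: gamma_seq_tendsto\<close>)

theorem theorem1:
  fixes \<alpha> :: real and u :: "nat \<Rightarrow> 'a::{real_normed_field, banach}"
  assumes "0 < \<alpha>" and "\<alpha> < 1" and "\<forall>k. u k \<noteq> 0"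
  shows "BK_space (c0_GD \<alpha> u) (GD_norm \<alpha> u) \<and> BK_space (c_GD \<alpha> u) (GD_norm \<alpha> u)"
proof -
  have "\<alpha> + 1 \<notin> \<int>\<^sub>\<le>\<^sub>0"
    using \<open>0 < \<alpha>\<close> by auto
  then have transform: "sequence_transform (gamma_seq \<alpha> u)"
    using assms(3) by (intro sequence_transform_gamma_seq) auto
  have "c0_GD \<alpha> u = {x. gamma_seq \<alpha> u x \<in> {s. s \<longlonglongrightarrow> 0}}"
    and "c_GD \<alpha> u = {x. gamma_seq \<alpha> u x \<in> {s. convergent s}}"
    and "GD_norm \<alpha> u = (\<lambda>x. sup_norm (gamma_seq \<alpha> u x))"
    by (simp_all add: c0_GD_def c_GD_def GD_norm_def sup_norm_def fun_eq_iff)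
  then show ?thesis
    using BK_preimage.BK_space[OF BK_preimage.intro[OF transform closed_bseq_subspace_null_seqs]]
      BK_preimage.BK_space[OF BK_preimage.intro[OF transform closed_bseq_subspace_convergent_seqs]]
    by simp
qed

end
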